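(* Let $(X_n,\|\cdot\|_n)_{n\ge1}$ be a sequence of finite dimensional real Banach spaces, each having a normalized $1$-unconditional basis, and let $(X,\|\cdot\|)$ be the space defined in the context. Then the closed unit ball $B_X$ of $X$ is compact in the topology of pointwise convergence, i.e. the coarsest topology on $X$ making each coordinate map $x=(x_n)\mapsto x_n\in X_n$ continuous. In particular, if $x_m\in X$ with $\|x_m\|\le1$ for all $m$ and $x\in X$ with $x_m\overset{p}{\to}x$, then $\|x\|\le1$.
   Context: $c_{00}((X_n))$ is the vector space of sequences $(x_1,x_2,\dots)$ with $x_k\in X_k$ and only finitely many $x_k\ne0$; $(x_1,\dots,x_n)$ denotes $(x_1,\dots,x_n,0,0,\dots)$. On $c_{00}((X_n))$ define inductively $\|(x_1)\|=\|x_1\|_1$ (the norm of $X_1$) and, for $n\ge2$, $$\|(x_1,\dots,x_n)\|=\Big(1-\tfrac{1}{n+1}\Big)\big(\|x_n\|_n+\|(x_1,\dots,x_{n-1})\|\big)+\tfrac{1}{n+1}\max\Big\{\tfrac{\|x_n\|_n}{n},\ \|(x_1,\dots,x_{n-1})\|\Big\}.$$ $X$ is the completion of $(c_{00}((X_n)),\|\cdot\|)$, identified with the space of sequences $x=(x_n)$, $x_n\in X_n$, with $\sum_n\|x_n\|_n<\infty$, where $\|x\|=\lim_k\|(x_1,\dots,x_k)\|$. For $x_m=(x_{m1},x_{m2},\dots)$ and $x=(x_1,x_2,\dots)$ in $X$, $x_m\overset{p}{\to}x$ means $\|x_{mn}-x_n\|_n\to0$ as $m\to\infty$ for every $n$.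 *)

theory Defs
  imports "HOL-Analysis.Analysis"
begin

text \<open>The paper's spaces X_1, X_2, ... are indexed here from 0:
  index n stands for the paper's X_(n+1). Each finite dimensional space X_(n+1)
  with its normalized 1-unconditional basis (e_i) is identified, via coordinates
  with respect to that basis, with the coordinate space
  V d n = {v :: nat => real. v i = 0 for i >= d n}, carrying the norm N n;
  the basis vector e_i is the i-th unit vector.\<close>

definition V :: "(nat \<Rightarrow> nat) \<Rightarrow> nat \<Rightarrow> (nat \<Rightarrow> real) set" where
  "V d n = {v. \<forall>i. d n \<le> i \<longrightarrow> v i = 0}"

definition unitvec :: "nat \<Rightarrow> nat \<Rightarrow> real" where
  "unitvec i = (\<lambda>j. if j = i then 1 else 0)"

definition is_norm_on :: "(nat \<Rightarrow> real) set \<Rightarrow> ((nat \<Rightarrow> real) \<Rightarrow> real) \<Rightarrow> bool" where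
  "is_norm_on S p \<longleftrightarrow>
     (\<forall>v\<in>S. 0 \<le> p v) \<and>
     (\<forall>v\<in>S. p v = 0 \<longleftrightarrow> v = (\<lambda>_. 0)) \<and>
     (\<forall>v\<in>S. \<forall>c::real. p (\<lambda>i. c * v i) = \<bar>c\<bar> * p v) \<and>
     (\<forall>v\<in>S. \<forall>w\<in>S. p (\<lambda>i. v i + w i) \<le> p v + p w)"

definition normalized_1_unconditional :: "nat \<Rightarrow> ((nat \<Rightarrow> real) \<Rightarrow> real) \<Rightarrow> bool" where
  "normalized_1_unconditional k p \<longleftrightarrow>
     (\<forall>i<k. p (unitvec i) = 1) \<and>
     (\<forall>a::nat \<Rightarrow> real. \<forall>eps::nat \<Rightarrow> real.
        (\<forall>i. eps i = 1 \<or> eps i = -1) \<longrightarrow>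
        p (\<lambda>j. \<Sum>i<k. eps i * a i * unitvec i j) = p (\<lambda>j. \<Sum>i<k. a i * unitvec i j))"

text \<open>Norm of the finite sequence (x_1,...,x_k) (paper indexing); pnorm N x k uses
  the entries x 0, ..., x (k-1) here.\<close>
fun pnorm :: "(nat \<Rightarrow> (nat \<Rightarrow> real) \<Rightarrow> real) \<Rightarrow> (nat \<Rightarrow> nat \<Rightarrow> real) \<Rightarrow> nat \<Rightarrow> real" where
  "pnorm N x 0 = 0"
| "pnorm N x (Suc 0) = N 0 (x 0)"
| "pnorm N x (Suc (Suc k)) =
     (let n = real (k + 2); a = N (Suc k) (x (Suc k)); p = pnorm N x (Suc k) in
      (1 - 1 / (n + 1)) * (a + p) + 1 / (n + 1) * max (a / n) p)"

definition Xspace :: "(nat \<Rightarrow> nat) \<Rightarrow> (nat \<Rightarrow> (nat \<Rightarrow> real) \<Rightarrow> real) \<Rightarrow> (nat \<Rightarrow> nat \<Rightarrow> real) set" where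
  "Xspace d N = {x. (\<forall>n. x n \<in> V d n) \<and> summable (\<lambda>n. N n (x n))}"

definition Xnorm :: "(nat \<Rightarrow> (nat \<Rightarrow> real) \<Rightarrow> real) \<Rightarrow> (nat \<Rightarrow> nat \<Rightarrow> real) \<Rightarrow> real" where
  "Xnorm N x = lim (\<lambda>k. pnorm N x k)"

definition unit_ball :: "(nat \<Rightarrow> nat) \<Rightarrow> (nat \<Rightarrow> (nat \<Rightarrow> real) \<Rightarrow> real) \<Rightarrow> (nat \<Rightarrow> nat \<Rightarrow> real) set" where
  "unit_ball d N = {x \<in> Xspace d N. Xnorm N x \<le> 1}"

definition Xn_top :: "(nat \<Rightarrow> nat) \<Rightarrow> (nat \<Rightarrow> (nat \<Rightarrow> real) \<Rightarrow> real) \<Rightarrow> nat \<Rightarrow> (nat \<Rightarrow> real) topology" where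
  "Xn_top d N n = topology (\<lambda>U. U \<subseteq> V d n \<and>
     (\<forall>v\<in>U. \<exists>e>0. \<forall>w\<in>V d n. N n (\<lambda>i. w i - v i) < e \<longrightarrow> w \<in> U))"

text \<open>Topology of pointwise convergence on X: the coarsest topology making every
  coordinate map x \<mapsto> x_n continuous, i.e. the product topology restricted to X.\<close>
definition pointwise_top :: "(nat \<Rightarrow> nat) \<Rightarrow> (nat \<Rightarrow> (nat \<Rightarrow> real) \<Rightarrow> real) \<Rightarrow> (nat \<Rightarrow> nat \<Rightarrow> real) topology" where
  "pointwise_top d N = subtopology (product_topology (Xn_top d N) UNIV) (Xspace d N)"

end

theory Submission
  imports Defs
begin

text \<open>Each X_n is finite dimensional, so its norm topology is the coordinatewise one, in
  which closed norm balls are closed and bounded, hence compact; this rests on the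
  estimates |v_i| \<le> \<parallel>v\<parallel> \<le> \<Sum> |v_i| coming from the normalized 1-unconditional basis.
  The finite norms \<parallel>(x_1,...,x_k)\<parallel> increase in k, lie between half of \<Sum>_{n\<le>k} \<parallel>x_n\<parallel>_n
  and that sum, and depend continuously on x_1, ..., x_k. Hence B_X consists exactly of
  the sequences all of whose finite norms are at most 1, an intersection of closed sets in
  the product topology, and it lies in the product of the compact balls of radius 2.
  Tychonoff's theorem gives compactness, and closedness gives the sequential statement.\<close>

definition coord_space :: "nat \<Rightarrow> (nat \<Rightarrow> real) set" where
  "coord_space k = {v. \<forall>i. k \<le> i \<longrightarrow> v i = 0}"

lemma V_eq_coord_space: "V d n = coord_space (d n)"
  by (simp add: V_def coord_space_def)

lemma diff_in_coord_space:
  "v \<in> coord_space k \<Longrightarrow> w \<in> coord_space k \<Longrightarrow> (\<lambda>i. v i - w i) \<in> coord_space k"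
  by (simp add: coord_space_def)

lemma sum_unitvec_eq:
  assumes "v \<in> coord_space k"
  shows "(\<lambda>j. \<Sum>i<k. v i * unitvec i j) = v"
proof
  fix j
  show "(\<Sum>i<k. v i * unitvec i j) = v j"
  proof (cases "j < k")
    case True
    then have "(\<Sum>i<k. v i * unitvec i j) = (\<Sum>i\<in>{j}. v i * unitvec i j)"
      by (intro sum.mono_neutral_right) (auto simp: unitvec_def)
    then show ?thesis by (simp add: unitvec_def)
  qed (use assms in \<open>auto simp: coord_space_def unitvec_def\<close>)
qed

definition norm_topology ::
  "(nat \<Rightarrow> real) set \<Rightarrow> ((nat \<Rightarrow> real) \<Rightarrow> real) \<Rightarrow> (nat \<Rightarrow> real) topology" where
  "norm_topology S p = topology (\<lambda>U. U \<subseteq> S \<and>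
     (\<forall>v\<in>U. \<exists>e>0. \<forall>w\<in>S. p (\<lambda>i. w i - v i) < e \<longrightarrow> w \<in> U))"

lemma Xn_top_eq_norm_topology: "Xn_top d N n = norm_topology (V d n) (N n)"
  by (simp add: Xn_top_def norm_topology_def)

lemma openin_norm_topology:
  "openin (norm_topology S p) U \<longleftrightarrow>
     U \<subseteq> S \<and> (\<forall>v\<in>U. \<exists>e>0. \<forall>w\<in>S. p (\<lambda>i. w i - v i) < e \<longrightarrow> w \<in> U)"
proof -
  define nbhd where "nbhd U v \<longleftrightarrow> (\<exists>e>0. \<forall>w\<in>S. p (\<lambda>i. w i - v i) < e \<longrightarrow> w \<in> U)" for U v
  have nbhd_mono: "nbhd W v" if "nbhd U v" "U \<subseteq> W" for U W v
    using that unfolding nbhd_def by blast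
  have nbhd_Int: "nbhd (U \<inter> W) v" if U: "nbhd U v" and W: "nbhd W v" for U W v
  proof -
    obtain e1 e2 where "e1 > 0" "\<forall>w\<in>S. p (\<lambda>i. w i - v i) < e1 \<longrightarrow> w \<in> U"
      and "e2 > 0" "\<forall>w\<in>S. p (\<lambda>i. w i - v i) < e2 \<longrightarrow> w \<in> W"
      using U W unfolding nbhd_def by blast
    then show ?thesis
      unfolding nbhd_def by (intro exI[of _ "min e1 e2"]) auto
  qed
  have "istopology (\<lambda>U. U \<subseteq> S \<and> (\<forall>v\<in>U. nbhd U v))"
    unfolding istopology_def
  proof (rule conjI; intro allI impI)
    fix U W
    assume "U \<subseteq> S \<and> (\<forall>v\<in>U. nbhd U v)" "W \<subseteq> S \<and> (\<forall>v\<in>W. nbhd W v)"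
    then show "U \<inter> W \<subseteq> S \<and> (\<forall>v\<in>U \<inter> W. nbhd (U \<inter> W) v)"
      using nbhd_Int by blast
  next
    fix K
    assume K: "\<forall>U\<in>K. U \<subseteq> S \<and> (\<forall>v\<in>U. nbhd U v)"
    have "nbhd (\<Union>K) v" if v: "v \<in> \<Union>K" for v
    proof -
      obtain U where "U \<in> K" "v \<in> U"
        using v by blast
      then show ?thesis
        using K nbhd_mono[of U v "\<Union>K"] by blast
    qed
    then show "\<Union>K \<subseteq> S \<and> (\<forall>v\<in>\<Union>K. nbhd (\<Union>K) v)"
      using K by blast
  qed
  then show ?thesis
    by (simp add: norm_topology_def nbhd_def)
qed

lemma topspace_norm_topology [simp]: "topspace (norm_topology S p) = S"
proof -
  have "openin (norm_topology S p) S"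
    by (auto simp: openin_norm_topology intro: exI[of _ 1])
  then have "S \<subseteq> topspace (norm_topology S p)"
    by (rule openin_subset)
  moreover have "topspace (norm_topology S p) \<subseteq> S"
    using openin_topspace[of "norm_topology S p"] by (simp only: openin_norm_topology)
  ultimately show ?thesis
    by blast
qed

lemma continuous_map_norm_topology:
  assumes "\<And>v w. v \<in> S \<Longrightarrow> w \<in> S \<Longrightarrow> \<bar>f w - f v\<bar> \<le> p (\<lambda>i. w i - v i)"
  shows "continuous_map (norm_topology S p) euclideanreal f"
  unfolding continuous_map_def topspace_norm_topology
proof (intro conjI allI impI)
  fix U :: "real set"
  assume "openin euclideanreal U"
  then have "open U" by simp
  show "openin (norm_topology S p) {v \<in> S. f v \<in> U}"
    unfolding openin_norm_topology
  proof (intro conjI ballI)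
    fix v assume v: "v \<in> {v \<in> S. f v \<in> U}"
    then have "f v \<in> U"
      by simp
    then obtain e where "e > 0" "ball (f v) e \<subseteq> U"
      using open_contains_ball_eq[OF \<open>open U\<close>] by blast
    moreover have "f w \<in> ball (f v) e" if "w \<in> S" "p (\<lambda>i. w i - v i) < e" for w
      using assms[of v w] v that by (simp add: dist_real_def abs_minus_commute)
    ultimately show "\<exists>e>0. \<forall>w\<in>S. p (\<lambda>i. w i - v i) < e \<longrightarrow> w \<in> {v \<in> S. f v \<in> U}"
      by blast
  qed auto
qed auto

lemma limitin_norm_topology:
  assumes "\<And>m. y m \<in> S" and "l \<in> S" and "(\<lambda>m. p (\<lambda>i. y m i - l i)) \<longlonglongrightarrow> 0"
  shows "limitin (norm_topology S p) y l sequentially"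
  unfolding limitin_def topspace_norm_topology
proof (intro conjI allI impI)
  fix U assume "openin (norm_topology S p) U \<and> l \<in> U"
  then obtain e where "e > 0" "\<forall>w\<in>S. p (\<lambda>i. w i - l i) < e \<longrightarrow> w \<in> U"
    by (auto simp: openin_norm_topology)
  moreover have "\<forall>\<^sub>F m in sequentially. p (\<lambda>i. y m i - l i) < e"
    using order_tendstoD(2)[OF assms(3) \<open>e > 0\<close>] .
  ultimately show "\<forall>\<^sub>F m in sequentially. y m \<in> U"
    using assms(1) by (auto elim: eventually_mono)
qed (use assms in auto)

locale unconditional_coord_norm =
  fixes k :: nat and p :: "(nat \<Rightarrow> real) \<Rightarrow> real"
  assumes norm: "is_norm_on (coord_space k) p"
    and basis: "normalized_1_unconditional k p"
begin

lemma nonneg: "v \<in> coord_space k \<Longrightarrow> 0 \<le> p v"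
  using norm by (simp add: is_norm_on_def)

lemma homogeneous: "v \<in> coord_space k \<Longrightarrow> p (\<lambda>i. c * v i) = \<bar>c\<bar> * p v"
  using norm by (simp add: is_norm_on_def)

lemma triangle:
  "v \<in> coord_space k \<Longrightarrow> w \<in> coord_space k \<Longrightarrow> p (\<lambda>i. v i + w i) \<le> p v + p w"
  using norm by (simp add: is_norm_on_def)

lemma norm_unitvec [simp]: "i < k \<Longrightarrow> p (unitvec i) = 1"
  using basis by (simp add: normalized_1_unconditional_def)

lemma unitvec_in_coord_space: "i < k \<Longrightarrow> unitvec i \<in> coord_space k"
  by (simp add: coord_space_def unitvec_def)

lemma norm_minus_commute:
  assumes "v \<in> coord_space k" "w \<in> coord_space k"
  shows "p (\<lambda>i. v i - w i) = p (\<lambda>i. w i - v i)"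
  using homogeneous[OF diff_in_coord_space[OF assms(2,1)], of "-1"] by simp

lemma abs_diff_le:
  assumes "v \<in> coord_space k" "w \<in> coord_space k"
  shows "\<bar>p w - p v\<bar> \<le> p (\<lambda>i. w i - v i)"
  using triangle[OF assms(1) diff_in_coord_space[OF assms(2,1)]]
    triangle[OF assms(2) diff_in_coord_space[OF assms]] norm_minus_commute[OF assms]
  by simp

lemma norm_sum_unitvec_le: "m \<le> k \<Longrightarrow> p (\<lambda>j. \<Sum>i<m. a i * unitvec i j) \<le> (\<Sum>i<m. \<bar>a i\<bar>)"
proof (induction m)
  case 0
  show ?case
    using homogeneous[of "\<lambda>_. 0" 0] by (simp add: coord_space_def)
next
  case (Suc m)
  have in_space: "(\<lambda>j. \<Sum>i<m. a i * unitvec i j) \<in> coord_space k"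
    using Suc.prems by (simp add: coord_space_def unitvec_def)
  have u: "unitvec m \<in> coord_space k"
    using Suc.prems by (simp add: unitvec_in_coord_space)
  have "p (\<lambda>j. \<Sum>i<Suc m. a i * unitvec i j)
      \<le> p (\<lambda>j. \<Sum>i<m. a i * unitvec i j) + p (\<lambda>j. a m * unitvec m j)"
    using triangle[OF in_space] u by (simp add: coord_space_def)
  also have "p (\<lambda>j. a m * unitvec m j) = \<bar>a m\<bar>"
    using homogeneous[OF u, of "a m"] Suc.prems by simp
  finally show ?case
    using Suc by simp
qed

lemma norm_le_sum_abs: "v \<in> coord_space k \<Longrightarrow> p v \<le> (\<Sum>i<k. \<bar>v i\<bar>)"
  using norm_sum_unitvec_le[of k v] sum_unitvec_eq[of v] by simp

text \<open>Flipping the signs of all coordinates except the i-th does not change the norm, and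
  v plus its flipped version is 2 v_i e_i.\<close>
lemma abs_coord_le:
  assumes v: "v \<in> coord_space k"
  shows "\<bar>v i\<bar> \<le> p v"
proof (cases "i < k")
  case False
  then show ?thesis
    using v nonneg by (simp add: coord_space_def)
next
  case True
  define eps where "eps = (\<lambda>j. if j = i then 1 else - 1 :: real)"
  define v' where "v' = (\<lambda>j. \<Sum>l<k. eps l * v l * unitvec l j)"
  have "p v' = p (\<lambda>j. \<Sum>l<k. v l * unitvec l j)"
    using basis unfolding normalized_1_unconditional_def v'_def eps_def by simp
  then have p_v': "p v' = p v"
    using sum_unitvec_eq[OF v] by simp
  have v'_in: "v' \<in> coord_space k"
    by (simp add: v'_def coord_space_def unitvec_def)
  have sum_eq: "(\<lambda>j. v j + v' j) = (\<lambda>j. 2 * (v i * unitvec i j))"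
  proof
    fix j
    have "v j + v' j = (\<Sum>l<k. v l * unitvec l j) + (\<Sum>l<k. eps l * v l * unitvec l j)"
      using sum_unitvec_eq[OF v] unfolding v'_def by metis
    also have "\<dots> = (\<Sum>l<k. (1 + eps l) * v l * unitvec l j)"
      by (simp add: sum.distrib[symmetric] algebra_simps)
    also have "\<dots> = (\<Sum>l\<in>{i}. (1 + eps l) * v l * unitvec l j)"
      by (intro sum.mono_neutral_right) (use True in \<open>auto simp: eps_def\<close>)
    finally show "v j + v' j = 2 * (v i * unitvec i j)"
      by (simp add: eps_def)
  qed
  have "(\<lambda>j. v i * unitvec i j) \<in> coord_space k"
    using True by (simp add: coord_space_def unitvec_def)
  then have "p (\<lambda>j. 2 * (v i * unitvec i j)) = 2 * \<bar>v i\<bar>"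
    using homogeneous[OF unitvec_in_coord_space[OF True], of "v i"] homogeneous[of _ 2] True
    by simp
  moreover have "p (\<lambda>j. v j + v' j) \<le> p v + p v'"
    using triangle[OF v v'_in] .
  ultimately show ?thesis
    using sum_eq p_v' by simp
qed

lemma continuous_map_norm: "continuous_map (norm_topology (coord_space k) p) euclideanreal p"
  by (rule continuous_map_norm_topology) (rule abs_diff_le)

lemma norm_topology_eq_product_topology:
  "norm_topology (coord_space k) p =
     subtopology (product_topology (\<lambda>_. euclideanreal) UNIV) (coord_space k)"
  (is "?T = subtopology ?P ?S")
proof (rule topology_eq[THEN iffD2], intro allI iffI)
  fix U assume "openin ?T U"
  then have U: "U \<subseteq> ?S" "\<forall>v\<in>U. \<exists>e>0. \<forall>w\<in>?S. p (\<lambda>i. w i - v i) < e \<longrightarrow> w \<in> U"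
    by (auto simp: openin_norm_topology)
  show "openin (subtopology ?P ?S) U"
  proof (subst openin_subopen, intro ballI)
    fix v assume "v \<in> U"
    then obtain e where "e > 0" and e: "\<forall>w\<in>?S. p (\<lambda>i. w i - v i) < e \<longrightarrow> w \<in> U"
      using U by blast
    define W where "W = {w \<in> ?S. (\<Sum>i<k. \<bar>w i - v i\<bar>) \<in> {..<e}}"
    have "continuous_map (subtopology ?P ?S) euclideanreal (\<lambda>w. \<Sum>i<k. \<bar>w i - v i\<bar>)"
      by (intro continuous_map_from_subtopology continuous_intros) auto
    then have "openin (subtopology ?P ?S) W"
      unfolding W_def using openin_continuous_map_preimage[of _ _ _ "{..<e}"] by force
    moreover have "W \<subseteq> U"
    proof
      fix w assume "w \<in> W"
      then have "p (\<lambda>i. w i - v i) < e"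
        using norm_le_sum_abs[OF diff_in_coord_space, of w v] \<open>v \<in> U\<close> U by (auto simp: W_def)
      then show "w \<in> U"
        using e \<open>w \<in> W\<close> by (simp add: W_def)
    qed
    moreover have "v \<in> W"
      using \<open>v \<in> U\<close> U \<open>e > 0\<close> by (auto simp: W_def)
    ultimately show "\<exists>W. openin (subtopology ?P ?S) W \<and> v \<in> W \<and> W \<subseteq> U"
      by blast
  qed
next
  fix U assume U: "openin (subtopology ?P ?S) U"
  have "continuous_map ?T euclideanreal (\<lambda>w. w i)" for i
    using abs_coord_le[OF diff_in_coord_space] by (intro continuous_map_norm_topology) simp
  then have "continuous_map ?T (subtopology ?P ?S) id"
    by (simp add: continuous_map_in_subtopology continuous_map_componentwise_UNIV)
  from openin_continuous_map_preimage[OF this U]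
  have "openin ?T {w \<in> ?S. w \<in> U}"
    by simp
  moreover have "{w \<in> ?S. w \<in> U} = U"
    using openin_subset[OF U] by auto
  ultimately show "openin ?T U"
    by simp
qed

lemma compactin_norm_ball:
  "compactin (norm_topology (coord_space k) p) {v \<in> coord_space k. p v \<le> r}"
proof -
  define K where "K = PiE UNIV (\<lambda>i. if i < k then {-r..r} else {0})"
  have "compactin (product_topology (\<lambda>_. euclideanreal) UNIV) K"
    by (simp add: K_def compactin_PiE)
  moreover have "K \<subseteq> coord_space k"
  proof
    fix v assume "v \<in> K"
    then have coords: "v i \<in> (if i < k then {-r..r} else {0})" for i
      by (simp add: K_def PiE_iff)
    have "v i = 0" if "k \<le> i" for i
      using coords[of i] that by simp
    then show "v \<in> coord_space k"
      by (simp add: coord_space_def)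
  qed
  ultimately have "compactin (norm_topology (coord_space k) p) K"
    by (simp add: norm_topology_eq_product_topology compactin_subtopology)
  moreover have "{v \<in> coord_space k. p v \<le> r} \<subseteq> K"
  proof
    fix v assume v: "v \<in> {v \<in> coord_space k. p v \<le> r}"
    then have "-r \<le> v i \<and> v i \<le> r" for i
      using abs_coord_le[of v i] by (simp add: abs_le_iff)
    then show "v \<in> K"
      using v by (simp add: K_def PiE_iff coord_space_def)
  qed
  moreover have "closedin (norm_topology (coord_space k) p) {v \<in> coord_space k. p v \<le> r}"
    using closedin_continuous_map_preimage[OF continuous_map_norm, of "{..r}"] by simp
  ultimately show ?thesis
    by (rule closed_compactin)
qed

end

lemma convex_comb_max_bounds:
  fixes a q c n :: real
  assumes "0 \<le> a" "0 \<le> q" "0 \<le> c" "c \<le> 1/2" "1 \<le> n"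
  shows "q + a / 2 \<le> (1 - c) * (a + q) + c * max (a / n) q"
    and "(1 - c) * (a + q) + c * max (a / n) q \<le> q + a"
proof -
  have "a / n \<le> a"
    using assms by (simp add: divide_le_eq mult_le_cancel_left1)
  then have "c * q \<le> c * max (a / n) q" "c * max (a / n) q \<le> c * (a + q)"
    using assms by (auto intro!: mult_left_mono)
  moreover have "c * a \<le> a / 2"
    using assms mult_right_mono[of c "1/2" a] by simp
  ultimately show "q + a / 2 \<le> (1 - c) * (a + q) + c * max (a / n) q"
    and "(1 - c) * (a + q) + c * max (a / n) q \<le> q + a"
    by (simp_all add: algebra_simps)
qed

context
  fixes N :: "nat \<Rightarrow> (nat \<Rightarrow> real) \<Rightarrow> real" and x :: "nat \<Rightarrow> nat \<Rightarrow> real"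
  assumes nonneg: "\<And>n. 0 \<le> N n (x n)"
begin

lemma pnorm_Suc_bounds:
  assumes "0 \<le> pnorm N x k"
  shows "pnorm N x k + N k (x k) / 2 \<le> pnorm N x (Suc k) \<and>
         pnorm N x (Suc k) \<le> pnorm N x k + N k (x k)"
proof (cases k)
  case 0
  then show ?thesis
    using nonneg[of 0] by simp
next
  case (Suc j)
  have c: "0 \<le> 1 / (real (j + 2) + 1)" "1 / (real (j + 2) + 1) \<le> 1/2"
    by (simp_all add: field_simps)
  show ?thesis
    using convex_comb_max_bounds[OF nonneg[of k] assms c, of "real (j + 2)"] Suc
    by (simp add: Let_def)
qed

lemma pnorm_nonneg: "0 \<le> pnorm N x k"
proof (induction k)
  case (Suc k)
  then show ?case
    using pnorm_Suc_bounds[OF Suc.IH] nonneg[of k] by linarith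
qed simp

lemma pnorm_sum_bounds:
  "(\<Sum>n<k. N n (x n)) / 2 \<le> pnorm N x k \<and> pnorm N x k \<le> (\<Sum>n<k. N n (x n))"
proof (induction k)
  case (Suc k)
  then show ?case
    using pnorm_Suc_bounds[OF pnorm_nonneg, of k] by (simp add: add_divide_distrib)
qed simp

lemma incseq_pnorm: "incseq (pnorm N x)"
proof (rule incseq_SucI)
  fix k
  show "pnorm N x k \<le> pnorm N x (Suc k)"
    using pnorm_Suc_bounds[OF pnorm_nonneg, of k] nonneg[of k] by linarith
qed

lemma pnorm_tendsto_Xnorm:
  assumes "summable (\<lambda>n. N n (x n))"
  shows "pnorm N x \<longlonglongrightarrow> Xnorm N x" and "pnorm N x k \<le> Xnorm N x"
proof -
  have "pnorm N x k \<le> (\<Sum>n. N n (x n))" for k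
    using pnorm_sum_bounds[of k] sum_le_suminf[OF assms, of "{..<k}"] nonneg by force
  then obtain L where "pnorm N x \<longlonglongrightarrow> L" "\<And>k. pnorm N x k \<le> L"
    using incseq_convergent[OF incseq_pnorm] by metis
  moreover have "Xnorm N x = L"
    unfolding Xnorm_def using limI[OF \<open>pnorm N x \<longlonglongrightarrow> L\<close>] .
  ultimately show "pnorm N x \<longlonglongrightarrow> Xnorm N x" and "pnorm N x k \<le> Xnorm N x"
    by simp_all
qed

lemma summable_Xnorm_le_iff:
  "summable (\<lambda>n. N n (x n)) \<and> Xnorm N x \<le> r \<longleftrightarrow> (\<forall>k. pnorm N x k \<le> r)"
proof
  assume "summable (\<lambda>n. N n (x n)) \<and> Xnorm N x \<le> r"
  then show "\<forall>k. pnorm N x k \<le> r"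
    using pnorm_tendsto_Xnorm(2) by (meson order_trans)
next
  assume bounded: "\<forall>k. pnorm N x k \<le> r"
  then have "(\<Sum>n<k. N n (x n)) \<le> 2 * r" for k
    using pnorm_sum_bounds[of k] bounded[rule_format, of k] by linarith
  then have "summable (\<lambda>n. N n (x n))"
    using nonneg by (intro summableI_nonneg_bounded[where x="2 * r"])
  moreover have "Xnorm N x \<le> r"
    using LIMSEQ_le_const2[OF pnorm_tendsto_Xnorm(1)[OF calculation]] bounded by blast
  ultimately show "summable (\<lambda>n. N n (x n)) \<and> Xnorm N x \<le> r"
    by simp
qed

end

lemma continuous_map_pnorm:
  assumes "\<And>n. continuous_map X euclideanreal (\<lambda>x. N n (x n))"
  shows "continuous_map X euclideanreal (\<lambda>x. pnorm N x k)"
proof -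
  have "continuous_map X euclideanreal (\<lambda>x. pnorm N x k) \<and>
        continuous_map X euclideanreal (\<lambda>x. pnorm N x (Suc k))"
  proof (induction k)
    case (Suc k)
    then show ?case
      using assms[of "Suc k"] by (simp add: Let_def del: of_nat_add) (intro continuous_intros, auto)
  qed (use assms[of 0] in simp)
  then show ?thesis
    by blast
qed

context
  fixes d :: "nat \<Rightarrow> nat" and N :: "nat \<Rightarrow> (nat \<Rightarrow> real) \<Rightarrow> real"
  assumes coord_norms: "\<And>n. unconditional_coord_norm (d n) (N n)"
begin

lemma unit_ball_eq_pnorm_bounded:
  "unit_ball d N = {x. (\<forall>n. x n \<in> coord_space (d n)) \<and> (\<forall>k. pnorm N x k \<le> 1)}"
proof -
  have "x \<in> unit_ball d N \<longleftrightarrow> (\<forall>k. pnorm N x k \<le> 1)" if "\<forall>n. x n \<in> coord_space (d n)" for x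
    using summable_Xnorm_le_iff[of N x 1] unconditional_coord_norm.nonneg[OF coord_norms] that
    by (auto simp: unit_ball_def Xspace_def V_eq_coord_space)
  then show ?thesis
    by (auto simp: unit_ball_def Xspace_def V_eq_coord_space)
qed

lemma closedin_unit_ball: "closedin (product_topology (Xn_top d N) UNIV) (unit_ball d N)"
proof -
  let ?P = "product_topology (Xn_top d N) UNIV"
  have "continuous_map (Xn_top d N n) euclideanreal (N n)" for n
    using unconditional_coord_norm.continuous_map_norm[OF coord_norms]
    by (simp add: Xn_top_eq_norm_topology V_eq_coord_space)
  then have "continuous_map ?P euclideanreal (\<lambda>x. N n (x n))" for n
    using continuous_map_compose[OF continuous_map_product_projection] by (force simp: o_def)
  then have "continuous_map ?P (product_topology (\<lambda>_. euclideanreal) UNIV) (\<lambda>x k. pnorm N x k)"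
    by (simp add: continuous_map_componentwise_UNIV continuous_map_pnorm)
  from closedin_continuous_map_preimage[OF this, of "PiE UNIV (\<lambda>_. {..1})"]
  show ?thesis
    by (simp add: closedin_product_topology unit_ball_eq_pnorm_bounded PiE_iff
        Xn_top_eq_norm_topology V_eq_coord_space)
qed

lemma unit_ball_subset_norm_balls:
  "unit_ball d N \<subseteq> PiE UNIV (\<lambda>n. {v \<in> coord_space (d n). N n v \<le> 2})"
proof
  fix x assume "x \<in> unit_ball d N"
  then have x: "\<And>n. x n \<in> coord_space (d n)" "\<And>k. pnorm N x k \<le> 1"
    by (auto simp: unit_ball_eq_pnorm_bounded)
  have nonneg: "0 \<le> N n (x n)" for n
    using unconditional_coord_norm.nonneg[OF coord_norms x(1)] .
  have "N n (x n) \<le> 2" for n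
  proof -
    have "N n (x n) \<le> (\<Sum>j<Suc n. N j (x j))"
      by (rule member_le_sum) (use nonneg in auto)
    also have "\<dots> \<le> 2 * pnorm N x (Suc n)"
      using pnorm_sum_bounds[of N x "Suc n"] nonneg by simp
    finally show ?thesis
      using x(2)[of "Suc n"] by simp
  qed
  then show "x \<in> PiE UNIV (\<lambda>n. {v \<in> coord_space (d n). N n v \<le> 2})"
    using x(1) by (simp add: PiE_UNIV_domain)
qed

lemma compactin_unit_ball: "compactin (pointwise_top d N) (unit_ball d N)"
proof -
  have "compactin (product_topology (Xn_top d N) UNIV)
          (PiE UNIV (\<lambda>n. {v \<in> coord_space (d n). N n v \<le> 2}))"
    using unconditional_coord_norm.compactin_norm_ball[OF coord_norms]
    by (simp add: compactin_PiE Xn_top_eq_norm_topology V_eq_coord_space)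
  then have "compactin (product_topology (Xn_top d N) UNIV) (unit_ball d N)"
    using closed_compactin unit_ball_subset_norm_balls closedin_unit_ball by blast
  then show ?thesis
    by (simp add: pointwise_top_def compactin_subtopology unit_ball_def)
qed

lemma pointwise_limit_in_unit_ball:
  assumes "\<And>m. xs m \<in> unit_ball d N" and "x \<in> Xspace d N"
    and "\<And>n. (\<lambda>m. N n (\<lambda>i. xs m n i - x n i)) \<longlonglongrightarrow> 0"
  shows "x \<in> unit_ball d N"
proof -
  have "limitin (Xn_top d N n) (\<lambda>m. xs m n) (x n) sequentially" for n
    unfolding Xn_top_eq_norm_topology
    using assms by (intro limitin_norm_topology) (auto simp: unit_ball_def Xspace_def)
  then have "limitin (product_topology (Xn_top d N) UNIV) xs x sequentially"
    using assms(1) by (auto simp: limitin_componentwise unit_ball_eq_pnorm_bounded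
        Xn_top_eq_norm_topology V_eq_coord_space PiE_UNIV_domain)
  from limitin_closedin[OF this closedin_unit_ball] show ?thesis
    using assms(1) by simp
qed

end

theorem proposition2p1:
  fixes d :: "nat \<Rightarrow> nat" and N :: "nat \<Rightarrow> (nat \<Rightarrow> real) \<Rightarrow> real"
  assumes norms: "\<And>n. is_norm_on (V d n) (N n)"
    and bases: "\<And>n. normalized_1_unconditional (d n) (N n)"
  shows "compactin (pointwise_top d N) (unit_ball d N) \<and>
         (\<forall>xs x. (\<forall>m. xs m \<in> Xspace d N \<and> Xnorm N (xs m) \<le> 1) \<longrightarrow> x \<in> Xspace d N \<longrightarrow>
           (\<forall>n. (\<lambda>m. N n (\<lambda>i. xs m n i - x n i)) \<longlonglongrightarrow> 0) \<longrightarrow> Xnorm N x \<le> 1)"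
proof -
  have coord_norms: "unconditional_coord_norm (d n) (N n)" for n
    using norms bases by (simp add: unconditional_coord_norm_def V_eq_coord_space)
  have "Xnorm N x \<le> 1"
    if "\<forall>m. xs m \<in> Xspace d N \<and> Xnorm N (xs m) \<le> 1" and "x \<in> Xspace d N"
      and "\<forall>n. (\<lambda>m. N n (\<lambda>i. xs m n i - x n i)) \<longlonglongrightarrow> 0" for xs x
    using pointwise_limit_in_unit_ball[of d N xs x, OF coord_norms] that
    by (simp add: unit_ball_def)
  then show ?thesis
    using compactin_unit_ball[of d N, OF coord_norms] by blast
qed

end
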